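(* A nonzero $Q(X,Y)\in M_{s,\ell}$ has minimal $(1,k-1)$-weighted degree among the nonzero elements of $M_{s,\ell}$ if and only if $\varphi(Q(X,Y))$ has minimal $(1,-1)$-weighted degree among the nonzero elements of $\varphi(M_{s,\ell})$.
   Context: Let $\mathbb F_q$ be a finite field, $1\le k<n<q$, $\alpha_0,\dots,\alpha_{n-1}$ distinct nonzero elements of $\mathbb F_q$, $w_0,\dots,w_{n-1}$ nonzero elements of $\mathbb F_q$, and $r\in\mathbb F_q^n$ a word with $r_i=0$ for $i=0,\dots,k-1$; let $r_i'=r_i/w_i$. For positive integers $s\le\ell$, $M_{s,\ell}$ is the $\mathbb F_q[X]$-module of all $Q\in\mathbb F_q[X,Y]$ of $Y$-degree at most $\ell$ such that for each $i$, $Q(X+\alpha_i,Y+r_i')$ has no monomials of total degree less than $s$. Let $L(X)=\prod_{i=0}^{k-1}(X-\alpha_i)$ and $\varphi(Q)(X,Y)=L(X)^{-s}Q(X,L(X)Y)$ for $Q\in M_{s,\ell}$ (under the assumption on $r$, $\varphi(Q)\in\mathbb F_q[X,Y]$); $\varphi(M_{s,\ell})$ is the image. For integers $u,v$, the $(u,v)$-weighted degree of a nonzero bivariate polynomial is the maximum of $ui+vj$ over its monomials $X^iY^j$. *)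

theory Defs
  imports "HOL-Computational_Algebra.Polynomial"
begin

text \<open>Bivariate polynomials in X, Y over 'a are represented as 'a poly poly:
  polynomials in Y whose coefficients are polynomials in X.\<close>

definition bcoeff :: "'a::zero poly poly \<Rightarrow> nat \<Rightarrow> nat \<Rightarrow> 'a" where
  "bcoeff Q i j = coeff (coeff Q j) i"

definition bshift :: "'a::comm_ring_1 poly poly \<Rightarrow> 'a \<Rightarrow> 'a \<Rightarrow> 'a poly poly" where
  "bshift Q a b = pcompose (map_poly (\<lambda>p. pcompose p [:a, 1:]) Q) [:[:b:], 1:]"

definition wdeg :: "int \<Rightarrow> int \<Rightarrow> 'a::zero poly poly \<Rightarrow> int" where
  "wdeg u v Q = Max {u * int i + v * int j | i j. bcoeff Q i j \<noteq> 0}"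

definition Mmod :: "nat \<Rightarrow> ('a::field) list \<Rightarrow> 'a list \<Rightarrow> nat \<Rightarrow> nat \<Rightarrow> 'a poly poly set" where
  "Mmod n alpha r' s l = {Q. degree Q \<le> l \<and>
     (\<forall>i<n. \<forall>a b. a + b < s \<longrightarrow> bcoeff (bshift Q (alpha ! i) (r' ! i)) a b = 0)}"

definition Lpoly :: "nat \<Rightarrow> ('a::field) list \<Rightarrow> 'a poly" where
  "Lpoly k alpha = (\<Prod>i<k. [:- (alpha ! i), 1:])"

text \<open>phi(Q)(X,Y) = L(X)^(-s) Q(X, L(X) Y): the coefficient of Y^j is
  coeff Q j * L^j / L^s (an exact polynomial division under the hypotheses).\<close>
definition phi :: "'a::field poly \<Rightarrow> nat \<Rightarrow> 'a poly poly \<Rightarrow> 'a poly poly" where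
  "phi L s Q = Poly (map (\<lambda>j. (coeff Q j * L ^ j) div L ^ s) [0..<Suc (degree Q)])"

end

theory Submission imports Defs begin

text \<open>Since r'_i = 0 for i < k, every Q in M_{s,l} vanishes to order s at the points (alpha_i, 0),
  so L^(s-j) divides the coefficient q_j of Y^j. Hence phi replaces q_j by q_j L^(j-s), a nonzero
  polynomial of X-degree deg q_j + (j - s) k. Thus phi is injective on nonzero elements and
  wdeg_(1,-1) (phi Q) = wdeg_(1,k-1) Q - s k: the two weighted degrees differ by a constant,
  so minimality is preserved in both directions.\<close>

lemma pcompose_power_left: "(p ^ m) \<circ>\<^sub>p q = (p \<circ>\<^sub>p q) ^ m"
  by (induction m) (simp_all add: pcompose_mult pcompose_1)

lemma linear_power_dvd_if_shifted_coeffs_zero: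
  fixes p :: "'a::field poly"
  assumes "\<forall>c<m. coeff (p \<circ>\<^sub>p [:a, 1:]) c = 0"
  shows "[:-a, 1:] ^ m dvd p"
proof -
  obtain h where h: "p \<circ>\<^sub>p [:a, 1:] = monom 1 m * h"
    using assms monom_1_dvd_iff' by blast
  have "p = (p \<circ>\<^sub>p [:a, 1:]) \<circ>\<^sub>p [:-a, 1:]"
    by (simp add: pcompose_assoc[symmetric] pcompose_pCons)
  also have "\<dots> = [:-a, 1:] ^ m * (h \<circ>\<^sub>p [:-a, 1:])"
    by (simp add: h pcompose_mult monom_altdef pcompose_power_left pcompose_pCons)
  finally show ?thesis
    by (metis dvd_triv_left)
qed

lemma linear_power_dvd_cofactor:
  fixes p :: "'a::field poly"
  assumes "p = [:-a, 1:] ^ m * q" "p \<noteq> 0" "b \<noteq> a" "[:-b, 1:] ^ n dvd p"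
  shows "[:-b, 1:] ^ n dvd q"
proof -
  have "order b ([:-a, 1:] ^ m) = 0"
    using assms(3) by (intro order_0I) simp
  then have "order b p = order b q"
    using assms(1,2) order_mult[of "[:-a, 1:] ^ m" q b] by simp
  then show ?thesis
    using assms(2,4) order_divides by metis
qed

lemma prod_linear_power_dvd:
  fixes p :: "'a::field poly"
  assumes "finite A" "inj_on f A" "\<forall>i\<in>A. [:-f i, 1:] ^ m dvd p"
  shows "(\<Prod>i\<in>A. [:-f i, 1:]) ^ m dvd p"
  using assms
proof (induction A arbitrary: p rule: finite_induct)
  case empty
  then show ?case by simp
next
  case (insert i A)
  have inj: "inj_on f A" and fresh: "f i \<notin> f ` A"
    using insert.prems(1) insert.hyps(2) by (simp_all add: inj_on_insert)
  show ?case
  proof (cases "p = 0")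
    case False
    have "[:-f i, 1:] ^ m dvd p"
      using insert.prems(2) by simp
    then obtain q where q: "p = [:-f i, 1:] ^ m * q" ..
    have "\<forall>j\<in>A. [:-f j, 1:] ^ m dvd q"
    proof
      fix j assume "j \<in> A"
      moreover from this have "f j \<noteq> f i"
        using fresh by (metis image_eqI)
      ultimately show "[:-f j, 1:] ^ m dvd q"
        using linear_power_dvd_cofactor[OF q False] insert.prems(2) by simp
    qed
    then have "(\<Prod>j\<in>A. [:-f j, 1:]) ^ m dvd q"
      by (rule insert.IH[OF inj])
    then have "[:-f i, 1:] ^ m * (\<Prod>j\<in>A. [:-f j, 1:]) ^ m dvd p"
      unfolding q by (rule mult_dvd_mono[OF dvd_refl])
    then show ?thesis
      by (simp only: prod.insert[OF insert.hyps] power_mult_distrib)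
  qed simp
qed

lemma finite_nonzero_coeffs: "finite {j. coeff p j \<noteq> 0}"
  using MOST_coeff_eq_0[of p] by (simp add: MOST_iff_cofinite)

lemma wdeg_1_eq_Max_degree_coeff:
  fixes Q :: "'a::zero poly poly"
  assumes "Q \<noteq> 0"
  shows "wdeg 1 v Q = Max ((\<lambda>j. int (degree (coeff Q j)) + v * int j) ` {j. coeff Q j \<noteq> 0})"
proof -
  let ?S = "{1 * int i + v * int j | i j. bcoeff Q i j \<noteq> 0}"
  let ?T = "(\<lambda>j. int (degree (coeff Q j)) + v * int j) ` {j. coeff Q j \<noteq> 0}"
  have supp: "coeff Q j \<noteq> 0 \<and> i \<le> degree (coeff Q j)" if "bcoeff Q i j \<noteq> 0" for i j
    using that by (auto simp: bcoeff_def intro: le_degree)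
  have "finite ?T"
    by (intro finite_imageI finite_nonzero_coeffs)
  moreover have "?T \<noteq> {}"
    using assms by (auto intro!: exI[of _ "degree Q"])
  ultimately have max_T: "Max ?T \<in> ?T" by (rule Max_in)
  have "Max ?S = Max ?T"
  proof (rule Max_eqI)
    have "?S \<subseteq> (\<lambda>(j, i). 1 * int i + v * int j) ` (SIGMA j:{j. coeff Q j \<noteq> 0}. {..degree (coeff Q j)})"
    proof
      fix y assume "y \<in> ?S"
      then obtain i j where "bcoeff Q i j \<noteq> 0" "y = 1 * int i + v * int j"
        by blast
      with supp show "y \<in> (\<lambda>(j, i). 1 * int i + v * int j) ` (SIGMA j:{j. coeff Q j \<noteq> 0}. {..degree (coeff Q j)})"
        by (auto intro!: image_eqI[of _ _ "(j, i)"])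
    qed
    then show "finite ?S"
      by (rule finite_subset) (auto intro: finite_nonzero_coeffs)
    show "y \<le> Max ?T" if "y \<in> ?S" for y
    proof -
      obtain i j where ij: "bcoeff Q i j \<noteq> 0" "y = 1 * int i + v * int j"
        using \<open>y \<in> ?S\<close> by blast
      then have "y \<le> int (degree (coeff Q j)) + v * int j"
        using supp by auto
      also have "\<dots> \<le> Max ?T"
        using supp[OF ij(1)] \<open>finite ?T\<close> by (intro Max_ge) auto
      finally show ?thesis .
    qed
    obtain j where "coeff Q j \<noteq> 0" "Max ?T = int (degree (coeff Q j)) + v * int j"
      using max_T by blast
    moreover from this have "bcoeff Q (degree (coeff Q j)) j \<noteq> 0"
      by (simp add: bcoeff_def)
    ultimately show "Max ?T \<in> ?S"
      by auto
  qed
  then show ?thesis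
    unfolding wdeg_def by simp
qed

lemma coeff_phi_mult:
  assumes "\<forall>j. L ^ s dvd coeff Q j * L ^ j"
  shows "coeff (phi L s Q) j * L ^ s = coeff Q j * L ^ j"
proof -
  have "coeff (phi L s Q) j = (if j \<le> degree Q then (coeff Q j * L ^ j) div L ^ s else 0)"
    unfolding phi_def coeff_Poly_eq by (auto simp: nth_default_def simp del: upt_Suc)
  then show ?thesis
    using assms by (auto simp: coeff_eq_0)
qed

lemma coeff_phi_eq_0_iff:
  assumes "L \<noteq> 0" "\<forall>j. L ^ s dvd coeff Q j * L ^ j"
  shows "coeff (phi L s Q) j = 0 \<longleftrightarrow> coeff Q j = 0"
  using coeff_phi_mult[OF assms(2), of j] assms(1) by (metis mult_eq_0_iff power_not_zero)

lemma degree_coeff_phi: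
  assumes "L \<noteq> 0" "\<forall>j. L ^ s dvd coeff Q j * L ^ j" "coeff Q j \<noteq> 0"
  shows "int (degree (coeff (phi L s Q) j))
    = int (degree (coeff Q j)) + int j * int (degree L) - int s * int (degree L)"
proof -
  have "coeff (phi L s Q) j \<noteq> 0"
    using assms coeff_phi_eq_0_iff by blast
  then have "degree (coeff (phi L s Q) j) + s * degree L = degree (coeff Q j) + j * degree L"
    using arg_cong[OF coeff_phi_mult[OF assms(2), of j], of degree] assms(1,3)
    by (simp add: degree_mult_eq degree_power_eq)
  then show ?thesis
    by (metis add_diff_cancel_right' of_nat_add of_nat_mult)
qed

lemma wdeg_phi:
  fixes L :: "'a::field poly"
  assumes "L \<noteq> 0" "Q \<noteq> 0" "\<forall>j. L ^ s dvd coeff Q j * L ^ j"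
  shows "phi L s Q \<noteq> 0"
    and "wdeg 1 (-1) (phi L s Q) = wdeg 1 (int (degree L) - 1) Q - int s * int (degree L)"
proof -
  let ?J = "{j. coeff Q j \<noteq> 0}" and ?c = "int s * int (degree L)"
  have supp: "{j. coeff (phi L s Q) j \<noteq> 0} = ?J"
    using coeff_phi_eq_0_iff[OF assms(1,3)] by blast
  have "coeff (phi L s Q) (degree Q) \<noteq> 0"
    using coeff_phi_eq_0_iff[OF assms(1,3)] assms(2) by simp
  then show phi_nonzero: "phi L s Q \<noteq> 0"
    by auto
  have "?J \<noteq> {}"
    using assms(2) by (auto intro!: exI[of _ "degree Q"])
  have shift: "int (degree (coeff (phi L s Q) j)) + (-1) * int j
      = (int (degree (coeff Q j)) + (int (degree L) - 1) * int j) + - ?c" if "j \<in> ?J" for j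
    using degree_coeff_phi[OF assms(1,3)] that by (simp add: algebra_simps)
  have "wdeg 1 (-1) (phi L s Q)
      = Max ((\<lambda>j. int (degree (coeff (phi L s Q) j)) + (-1) * int j) ` ?J)"
    using wdeg_1_eq_Max_degree_coeff[OF phi_nonzero] supp by simp
  also have "\<dots> = Max ((\<lambda>j. (int (degree (coeff Q j)) + (int (degree L) - 1) * int j) + - ?c) ` ?J)"
    by (rule arg_cong[where f = Max], rule image_cong[OF refl shift])
  also have "\<dots> = Max ((\<lambda>j. int (degree (coeff Q j)) + (int (degree L) - 1) * int j) ` ?J) + - ?c"
    by (rule Max_add_commute[OF finite_nonzero_coeffs \<open>?J \<noteq> {}\<close>])
  also have "\<dots> = wdeg 1 (int (degree L) - 1) Q - ?c"
    using wdeg_1_eq_Max_degree_coeff[OF assms(2)] by simp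
  finally show "wdeg 1 (-1) (phi L s Q) = wdeg 1 (int (degree L) - 1) Q - ?c" .
qed

lemma minimal_iff_minimal_image:
  fixes d :: "'a::zero \<Rightarrow> 'c::ordered_ab_group_add" and e :: "'b::zero \<Rightarrow> 'c"
  assumes "f 0 = 0" "\<forall>P\<in>M. P \<noteq> 0 \<longrightarrow> f P \<noteq> 0 \<and> e (f P) = d P - c" "Q \<in> M" "Q \<noteq> 0"
  shows "(\<forall>P\<in>M. P \<noteq> 0 \<longrightarrow> d Q \<le> d P) \<longleftrightarrow> (\<forall>P\<in>f ` M. P \<noteq> 0 \<longrightarrow> e (f Q) \<le> e P)"
proof -
  have "e (f Q) \<le> e (f P) \<longleftrightarrow> d Q \<le> d P" if "P \<in> M" "P \<noteq> 0" for P
    using assms(2-4) that by (simp add: diff_le_eq)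
  moreover have "P \<noteq> 0" if "f P \<noteq> 0" for P
    using assms(1) that by auto
  ultimately show ?thesis
    using assms(2) by fastforce
qed

lemma Lpoly_nonzero: "Lpoly k alpha \<noteq> 0"
  unfolding Lpoly_def by (simp add: prod_zero_iff)

lemma degree_Lpoly: "degree (Lpoly k alpha) = k"
  unfolding Lpoly_def by (subst degree_prod_sum_eq) auto

lemma bcoeff_bshift_0: "bcoeff (bshift Q a 0) i j = coeff (coeff Q j \<circ>\<^sub>p [:a, 1:]) i"
  by (simp add: bshift_def bcoeff_def coeff_map_poly)

lemma Lpoly_power_dvd_coeff:
  assumes "k \<le> n" "length alpha = n" "distinct alpha" "\<forall>i<k. r' ! i = 0"
    and "Q \<in> Mmod n alpha r' s l"
  shows "Lpoly k alpha ^ (s - j) dvd coeff Q j"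
proof -
  have "[:-(alpha ! i), 1:] ^ (s - j) dvd coeff Q j" if "i < k" for i
  proof (rule linear_power_dvd_if_shifted_coeffs_zero, intro allI impI)
    fix c assume "c < s - j"
    then have "bcoeff (bshift Q (alpha ! i) (r' ! i)) c j = 0"
      using assms(1,5) \<open>i < k\<close> unfolding Mmod_def by auto
    then show "coeff (coeff Q j \<circ>\<^sub>p [:alpha ! i, 1:]) c = 0"
      using assms(4) \<open>i < k\<close> by (simp add: bcoeff_bshift_0)
  qed
  moreover have "inj_on (nth alpha) {..<k}"
    using assms(1-3) by (intro inj_on_nth) auto
  ultimately show ?thesis
    unfolding Lpoly_def by (intro prod_linear_power_dvd) auto
qed

lemma Lpoly_power_dvd_coeff_mult:
  assumes "k \<le> n" "length alpha = n" "distinct alpha" "\<forall>i<k. r' ! i = 0"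
    and "Q \<in> Mmod n alpha r' s l"
  shows "Lpoly k alpha ^ s dvd coeff Q j * Lpoly k alpha ^ j"
proof -
  have "Lpoly k alpha ^ s dvd Lpoly k alpha ^ (s - j) * Lpoly k alpha ^ j"
    by (simp add: le_imp_power_dvd flip: power_add)
  also have "\<dots> dvd coeff Q j * Lpoly k alpha ^ j"
    using Lpoly_power_dvd_coeff[OF assms] by (rule mult_dvd_mono) simp
  finally show ?thesis .
qed

theorem corollary4:
  fixes alpha w r :: "'a::{field,finite} list"
    and k n s l :: nat
    and Q :: "'a poly poly"
  assumes "1 \<le> k" and "k < n" and "n < card (UNIV :: 'a set)"
    and "length alpha = n" and "length w = n" and "length r = n"
    and "distinct alpha" and "\<forall>i<n. alpha ! i \<noteq> 0"
    and "\<forall>i<n. w ! i \<noteq> 0"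
    and "\<forall>i<k. r ! i = 0"
    and "1 \<le> s" and "s \<le> l"
    and "Q \<in> Mmod n alpha (map2 (/) r w) s l" and "Q \<noteq> 0"
  shows "(\<forall>P\<in>Mmod n alpha (map2 (/) r w) s l. P \<noteq> 0 \<longrightarrow>
             wdeg 1 (int k - 1) Q \<le> wdeg 1 (int k - 1) P)
     \<longleftrightarrow> (\<forall>P\<in>phi (Lpoly k alpha) s ` Mmod n alpha (map2 (/) r w) s l. P \<noteq> 0 \<longrightarrow>
             wdeg 1 (-1) (phi (Lpoly k alpha) s Q) \<le> wdeg 1 (-1) P)"
proof -
  let ?M = "Mmod n alpha (map2 (/) r w) s l" and ?L = "Lpoly k alpha"
  have "\<forall>i<k. map2 (/) r w ! i = 0"
    using assms(2,5,6,10) by auto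
  then have "\<forall>j. ?L ^ s dvd coeff P j * ?L ^ j" if "P \<in> ?M" for P
    using Lpoly_power_dvd_coeff_mult[OF _ assms(4,7) _ that] assms(2) by simp
  then have "\<forall>P\<in>?M. P \<noteq> 0 \<longrightarrow> phi ?L s P \<noteq> 0
      \<and> wdeg 1 (-1) (phi ?L s P) = wdeg 1 (int k - 1) P - int s * int k"
    using wdeg_phi[OF Lpoly_nonzero, of _ k alpha s] by (simp add: degree_Lpoly)
  moreover have "phi ?L s 0 = 0"
    by (simp add: phi_def)
  ultimately show ?thesis
    using assms(13,14) by (intro minimal_iff_minimal_image) auto
qed

end
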